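(* Let $\alpha\in(1,2)$ and let $p\ge2$ be an even integer (so $p>\alpha$). Set $a:=\left(\pi^4/48\right)^{1/\alpha}$. Then $$f^{p,0}(\theta)\le f^{p,\alpha}(\theta)\qquad\text{for all }\theta\text{ with }|\theta|\in[a,\pi].$$
   Context: For real $\beta\ge0$ and integer $p\ge 2$, $f^{p,\beta}(\theta)=\sum_{l\in\mathbb Z}|\theta+2l\pi|^{\beta}\left(\frac{\sin(\theta/2+l\pi)}{\theta/2+l\pi}\right)^{p+1}$ (with $\frac{\sin x}{x}:=1$ at $x=0$ and $|x|^0:=1$). *)

theory Defs
  imports "HOL-Analysis.Analysis"
begin

definition sinc :: "real \<Rightarrow> real" where
  "sinc x = (if x = 0 then 1 else sin x / x)"

definition abspow :: "real \<Rightarrow> real \<Rightarrow> real" where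
  "abspow x \<beta> = (if \<beta> = 0 then 1 else \<bar>x\<bar> powr \<beta>)"

definition fpb :: "nat \<Rightarrow> real \<Rightarrow> real \<Rightarrow> real" where
  "fpb p \<beta> \<theta> = (\<Sum>\<^sub>\<infinity>l\<in>(UNIV::int set).
      abspow (\<theta> + 2 * of_int l * pi) \<beta> * (sinc (\<theta> / 2 + of_int l * pi)) ^ (p + 1))"

end

theory Submission
  imports Defs
begin

text \<open>
  Write \<open>x\<^sub>l = \<theta> + 2l\<pi>\<close> and \<open>q = p + 1\<close>. Since \<open>sin (x\<^sub>l/2) = (-1)\<^sup>l sin (\<theta>/2)\<close> and \<open>q\<close> is odd,
  the \<open>l\<close>-th term of \<open>f\<^sup>p\<^sup>,\<^sup>\<alpha> - f\<^sup>p\<^sup>,\<^sup>0\<close> equals \<open>(-1)\<^sup>l (2 sin (\<theta>/2))\<^sup>q \<phi>(x\<^sub>l)\<close> with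
  \<open>\<phi>(x) = (\<bar>x\<bar>\<^sup>\<alpha> - 1) / x\<^sup>q\<close>. Grouping the terms \<open>l = 2k\<close> and \<open>l = 2k + 1\<close>, it suffices that
  \<open>\<phi>(x + 2\<pi>) \<le> \<phi>(x)\<close> for \<open>x = x\<^sub>2\<^sub>k\<close>. For \<open>k \<noteq> 0\<close> this is monotonicity of the odd function
  \<open>\<phi>\<close> on \<open>[\<pi>, \<infinity>)\<close>; for \<open>k = 0\<close> it follows from \<open>\<theta> / (\<theta> + 2\<pi>) \<le> 1/3\<close> together with
  \<open>\<theta>\<^sup>\<alpha> \<ge> \<pi>\<^sup>4/48 \<ge> 3/2\<close>. The series converge absolutely because the terms are
  \<open>O(\<bar>l\<bar>\<^sup>\<alpha>\<^sup>-\<^sup>q)\<close> with \<open>q - \<alpha> > 1\<close>.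
\<close>

definition fpb_term :: "nat \<Rightarrow> real \<Rightarrow> real \<Rightarrow> int \<Rightarrow> real" where
  "fpb_term p \<beta> \<theta> l = abspow (\<theta> + 2 * of_int l * pi) \<beta> * sinc (\<theta> / 2 + of_int l * pi) ^ (p + 1)"

lemma fpb_eq_infsum_fpb_term: "fpb p \<beta> \<theta> = (\<Sum>\<^sub>\<infinity>l. fpb_term p \<beta> \<theta> l)"
  by (simp add: fpb_def fpb_term_def)

lemma fpb_term_uminus: "fpb_term p \<beta> (- \<theta>) (- l) = fpb_term p \<beta> \<theta> l"
proof -
  have "- \<theta> + 2 * of_int (- l) * pi = - (\<theta> + 2 * of_int l * pi)"
    and "- \<theta> / 2 + of_int (- l) * pi = - (\<theta> / 2 + of_int l * pi)" by simp_all
  moreover have "abspow (- x) \<beta> = abspow x \<beta>" and "sinc (- x) = sinc x" for x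
    by (simp_all add: abspow_def sinc_def)
  ultimately show ?thesis by (simp only: fpb_term_def)
qed

lemma fpb_uminus: "fpb p \<beta> (- \<theta>) = fpb p \<beta> \<theta>"
proof -
  have "fpb p \<beta> (- \<theta>) = (\<Sum>\<^sub>\<infinity>l\<in>uminus ` UNIV. fpb_term p \<beta> (- \<theta>) l)"
    by (simp add: fpb_eq_infsum_fpb_term surj_def)
  also have "\<dots> = (\<Sum>\<^sub>\<infinity>l. fpb_term p \<beta> (- \<theta>) (- l))"
    by (subst infsum_reindex) (simp_all add: o_def)
  finally show ?thesis by (simp add: fpb_term_uminus fpb_eq_infsum_fpb_term)
qed

lemma summable_on_int_powr:
  assumes "r > 1"
  shows "(\<lambda>l::int. (real_of_int \<bar>l\<bar> + 1) powr (- r)) summable_on UNIV"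
proof -
  let ?G = "\<lambda>l::int. (real_of_int \<bar>l\<bar> + 1) powr (- r)"
  have "summable (\<lambda>n. real n powr (- r))"
    using assms by (subst summable_real_powr_iff) auto
  then have "summable (\<lambda>n. real (n + 1) powr (- r))"
    using summable_ignore_initial_segment[of _ 1] by fastforce
  then have nat: "(\<lambda>n::nat. (real n + 1) powr (- r)) summable_on UNIV"
    by (subst summable_on_UNIV_nonneg_real_iff) (auto simp: add.commute)
  have "?G summable_on range int"
    by (subst summable_on_reindex) (auto simp: o_def nat)
  moreover have "?G summable_on range (\<lambda>n. - int n)"
    by (subst summable_on_reindex) (auto simp: o_def nat inj_on_def)
  moreover have "l \<in> range int \<union> range (\<lambda>n. - int n)" for l :: int
    by (cases "l \<ge> 0") (auto intro: range_eqI[of _ _ "nat l"] range_eqI[of _ _ "nat (- l)"])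
  then have "UNIV = range int \<union> range (\<lambda>n. - int n)" by blast
  ultimately show ?thesis by (metis summable_on_union)
qed

lemma abs_shift_ge:
  fixes \<theta> :: real and l :: int
  assumes "1 \<le> \<theta>" "\<theta> \<le> pi"
  shows "real_of_int \<bar>l\<bar> + 1 \<le> \<bar>\<theta> + 2 * of_int l * pi\<bar>"
proof -
  consider "l = 0" | "l \<ge> 1" | "l \<le> -1" by linarith
  then show ?thesis
  proof cases
    case 1
    then show ?thesis using assms by simp
  next
    case 2
    then have "real_of_int l * 3 \<le> real_of_int l * pi" using pi_gt3 by (intro mult_left_mono) auto
    then have "real_of_int l + 1 \<le> \<theta> + 2 * of_int l * pi" using 2 assms by linarith
    then show ?thesis using 2 by simp
  next
    case 3
    then have "(- real_of_int l) * 3 \<le> (- real_of_int l) * pi" using pi_gt3 by (intro mult_left_mono) auto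
    then have "\<theta> + 2 * of_int l * pi \<le> - (real_of_int (- l) + 1)" using 3 assms pi_less_4 by linarith
    then show ?thesis using 3 by simp
  qed
qed

lemma fpb_term_abs_le:
  assumes "1 \<le> \<theta>" "\<theta> \<le> pi" "0 \<le> \<beta>" "\<beta> \<le> real (p + 1)"
  shows "\<bar>fpb_term p \<beta> \<theta> l\<bar> \<le> 2 ^ (p + 1) * (real_of_int \<bar>l\<bar> + 1) powr (\<beta> - real (p + 1))"
proof -
  define q where "q = p + 1"
  define x where "x = \<theta> + 2 * of_int l * pi"
  have xl: "real_of_int \<bar>l\<bar> + 1 \<le> \<bar>x\<bar>" using abs_shift_ge[OF assms(1,2)] by (simp add: x_def)
  then have x1: "\<bar>x\<bar> \<ge> 1" by linarith
  have half: "\<theta> / 2 + of_int l * pi = x / 2" by (simp add: x_def)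
  have "\<bar>sinc (x / 2)\<bar> = \<bar>sin (x / 2)\<bar> * (2 / \<bar>x\<bar>)"
    using x1 by (auto simp: sinc_def abs_divide)
  also have "\<dots> \<le> 2 / \<bar>x\<bar>" using x1 by (intro mult_left_le_one_le) auto
  finally have "\<bar>sinc (x / 2)\<bar> ^ q \<le> (2 / \<bar>x\<bar>) ^ q" by (intro power_mono) auto
  also have "\<dots> = 2 ^ q * \<bar>x\<bar> powr (- real q)"
    using x1 by (simp add: powr_minus powr_realpow power_divide divide_inverse power_inverse)
  finally have sinc_bound: "\<bar>sinc (x / 2)\<bar> ^ q \<le> 2 ^ q * \<bar>x\<bar> powr (- real q)" .
  have "\<bar>fpb_term p \<beta> \<theta> l\<bar> = \<bar>x\<bar> powr \<beta> * \<bar>sinc (x / 2)\<bar> ^ q"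
    using x1 by (simp add: fpb_term_def half abspow_def abs_mult power_abs q_def flip: x_def)
  also have "\<dots> \<le> \<bar>x\<bar> powr \<beta> * (2 ^ q * \<bar>x\<bar> powr (- real q))"
    using sinc_bound by (intro mult_left_mono) auto
  also have "\<dots> = 2 ^ q * \<bar>x\<bar> powr (\<beta> - real q)"
    using x1 by (simp add: powr_add[symmetric] mult_ac)
  also have "\<dots> \<le> 2 ^ q * (real_of_int \<bar>l\<bar> + 1) powr (\<beta> - real q)"
    using xl assms by (intro mult_left_mono powr_mono2') (auto simp: q_def)
  finally show ?thesis by (simp add: q_def)
qed

lemma fpb_term_summable:
  assumes "1 \<le> \<theta>" "\<theta> \<le> pi" "0 \<le> \<beta>" "\<beta> < real p"
  shows "fpb_term p \<beta> \<theta> summable_on UNIV"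
proof -
  have "(\<lambda>l::int. (real_of_int \<bar>l\<bar> + 1) powr (\<beta> - real (p + 1))) summable_on UNIV"
    using summable_on_int_powr[of "real (p + 1) - \<beta>"] assms(4) by simp
  then have "(\<lambda>l::int. 2 ^ (p + 1) * (real_of_int \<bar>l\<bar> + 1) powr (\<beta> - real (p + 1))) summable_on UNIV"
    by (rule summable_on_cmult_right)
  moreover have bound: "norm (fpb_term p \<beta> \<theta> l) \<le> 2 ^ (p + 1) * (real_of_int \<bar>l\<bar> + 1) powr (\<beta> - real (p + 1))"
    for l
    using fpb_term_abs_le[OF assms(1-3), of p l] assms(4) by simp
  ultimately have "(\<lambda>l. norm (fpb_term p \<beta> \<theta> l)) summable_on UNIV"
    by (rule summable_on_comparison_test) (simp_all only: bound norm_ge_zero)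
  then show ?thesis by (subst summable_on_iff_abs_summable_on_real)
qed

lemma infsum_int_pairs:
  fixes f :: "int \<Rightarrow> 'a::banach"
  assumes "f summable_on UNIV"
  shows "(\<Sum>\<^sub>\<infinity>l. f l) = (\<Sum>\<^sub>\<infinity>k. f (2 * k) + f (2 * k + 1))"
proof -
  have inj_even: "inj (\<lambda>k::int. 2 * k)" and inj_odd: "inj (\<lambda>k::int. 2 * k + 1)"
    by (auto simp: inj_on_def)
  have "l \<in> range (\<lambda>k. 2 * k) \<union> range (\<lambda>k. 2 * k + 1)" for l :: int
    by (cases "even l") (auto intro: range_eqI[of _ _ "l div 2"] elim!: evenE oddE)
  then have split: "UNIV = range (\<lambda>k::int. 2 * k) \<union> range (\<lambda>k. 2 * k + 1)" by blast
  have disj: "range (\<lambda>k::int. 2 * k) \<inter> range (\<lambda>k. 2 * k + 1) = {}" by auto presburger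
  have even: "f summable_on range (\<lambda>k. 2 * k)" and odd: "f summable_on range (\<lambda>k. 2 * k + 1)"
    by (rule summable_on_subset_banach[OF assms], simp)+
  have "(\<Sum>\<^sub>\<infinity>l. f l) = (\<Sum>\<^sub>\<infinity>l\<in>range (\<lambda>k. 2 * k). f l) + (\<Sum>\<^sub>\<infinity>l\<in>range (\<lambda>k. 2 * k + 1). f l)"
    by (subst split, rule infsum_Un_disjoint[OF even odd disj])
  also have "\<dots> = (\<Sum>\<^sub>\<infinity>k. f (2 * k)) + (\<Sum>\<^sub>\<infinity>k. f (2 * k + 1))"
    by (simp add: infsum_reindex[OF inj_even] infsum_reindex[OF inj_odd] o_def)
  also have "\<dots> = (\<Sum>\<^sub>\<infinity>k. f (2 * k) + f (2 * k + 1))"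
    using even odd
    by (intro infsum_add[symmetric]) (simp_all add: summable_on_reindex[OF inj_even] summable_on_reindex[OF inj_odd] o_def)
  finally show ?thesis .
qed

lemma sin_add_of_int_mult_pi: "sin (t + of_int l * pi) = (if even l then sin t else - sin t)"
proof (cases "even l")
  case True
  then obtain k where "l = 2 * k" by blast
  then have "sin (t + of_int l * pi) = sin (t + (2 * pi) * of_int k)" by (simp add: algebra_simps)
  then show ?thesis using True by (simp only: sin_add sin_int_2pin cos_int_2pin) simp
next
  case False
  then obtain k where "l = 2 * k + 1" by (blast elim: oddE)
  then have "sin (t + of_int l * pi) = sin ((t + pi) + (2 * pi) * of_int k)" by (simp add: algebra_simps)
  then show ?thesis using False by (simp only: sin_add sin_int_2pin cos_int_2pin) simp
qed

definition phi :: "real \<Rightarrow> nat \<Rightarrow> real \<Rightarrow> real" where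
  "phi \<alpha> q x = (\<bar>x\<bar> powr \<alpha> - 1) / x ^ q"

lemma phi_uminus: "odd q \<Longrightarrow> phi \<alpha> q (- x) = - phi \<alpha> q x"
  by (simp add: phi_def)

lemma fpb_term_diff:
  assumes "even p" "\<alpha> \<noteq> 0" "\<theta> + 2 * of_int l * pi \<noteq> 0"
  shows "fpb_term p \<alpha> \<theta> l - fpb_term p 0 \<theta> l
       = (if even l then 1 else -1) * (2 * sin (\<theta> / 2)) ^ (p + 1) * phi \<alpha> (p + 1) (\<theta> + 2 * of_int l * pi)"
proof -
  define x where "x = \<theta> + 2 * of_int l * pi"
  define \<sigma> :: real where "\<sigma> = (if even l then 1 else -1)"
  have x0: "x \<noteq> 0" using assms(3) by (simp add: x_def)
  have half: "\<theta> / 2 + of_int l * pi = x / 2" by (simp add: x_def)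
  have "sin (x / 2) = \<sigma> * sin (\<theta> / 2)"
    using sin_add_of_int_mult_pi[of "\<theta> / 2" l] by (simp add: half \<sigma>_def)
  then have "sinc (x / 2) = \<sigma> * (2 * sin (\<theta> / 2)) / x"
    using x0 by (simp add: sinc_def)
  then have "sinc (x / 2) ^ (p + 1) = \<sigma> ^ (p + 1) * (2 * sin (\<theta> / 2)) ^ (p + 1) / x ^ (p + 1)"
    by (simp only: power_divide power_mult_distrib)
  also have "\<sigma> ^ (p + 1) = \<sigma>" using assms(1) by (simp add: \<sigma>_def)
  finally have sinc_pow: "sinc (x / 2) ^ (p + 1) = \<sigma> * (2 * sin (\<theta> / 2)) ^ (p + 1) / x ^ (p + 1)" .
  have "fpb_term p \<beta> \<theta> l = abspow x \<beta> * sinc (x / 2) ^ (p + 1)" for \<beta>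
    unfolding fpb_term_def half x_def ..
  then have "fpb_term p \<alpha> \<theta> l - fpb_term p 0 \<theta> l = (\<bar>x\<bar> powr \<alpha> - 1) * sinc (x / 2) ^ (p + 1)"
    using assms(2) by (simp add: abspow_def left_diff_distrib)
  also have "\<dots> = \<sigma> * (2 * sin (\<theta> / 2)) ^ (p + 1) * phi \<alpha> (p + 1) x"
    unfolding sinc_pow phi_def by (simp add: field_simps)
  finally show ?thesis by (simp only: x_def \<sigma>_def)
qed

lemma phi_antimono:
  fixes u v \<alpha> :: real and q :: nat
  assumes "pi \<le> u" "u \<le> v" "1 < \<alpha>" "\<alpha> < 2" "q \<ge> 3"
  shows "phi \<alpha> q v \<le> phi \<alpha> q u"
proof -
  let ?h = "\<lambda>y::real. y powr (\<alpha> - real q) - y powr (- real q)"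
  have "?h v \<le> ?h u"
  proof (rule DERIV_nonpos_imp_nonincreasing[OF assms(2)])
    fix y assume "u \<le> y" "y \<le> v"
    then have y: "pi \<le> y" "0 < y" using assms(1) pi_gt3 by linarith+
    have D: "(?h has_real_derivative
        (\<alpha> - real q) * y powr (\<alpha> - real q - 1) + real q * y powr (- real q - 1)) (at y)"
      using y by (auto intro!: derivative_eq_intros)
    \<comment> \<open>the derivative has the sign of \<open>q - (q - \<alpha>) y\<^sup>\<alpha>\<close>, and \<open>(q - \<alpha>) y\<^sup>\<alpha> \<ge> (q - \<alpha>) \<pi> \<ge> q\<close>\<close>
    have "y \<le> y powr \<alpha>" using y pi_gt3 assms(3) powr_mono[of 1 \<alpha> y] by simp
    then have "(real q - \<alpha>) * pi \<le> (real q - \<alpha>) * y powr \<alpha>"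
      using y assms by (intro mult_left_mono) auto
    moreover have "real q \<le> (real q - \<alpha>) * pi"
    proof -
      have "\<alpha> * pi \<le> 2 * pi" using assms(4) by (intro mult_right_mono) auto
      also have "\<dots> \<le> 3 * (pi - 1)" using pi_gt3 by simp
      also have "\<dots> \<le> real q * (pi - 1)" using assms(5) pi_gt3 by (intro mult_right_mono) auto
      finally have "\<alpha> * pi \<le> real q * pi - real q" by (simp add: algebra_simps)
      then show ?thesis by (simp add: algebra_simps)
    qed
    ultimately have "real q * y powr (- real q - 1) \<le> (real q - \<alpha>) * y powr \<alpha> * y powr (- real q - 1)"
      by (intro mult_right_mono) auto
    moreover have "y powr (\<alpha> - real q - 1) = y powr \<alpha> * y powr (- real q - 1)"
      by (subst powr_add[symmetric]) (simp add: algebra_simps)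
    ultimately have "(\<alpha> - real q) * y powr (\<alpha> - real q - 1) + real q * y powr (- real q - 1) \<le> 0"
      by (simp add: algebra_simps)
    with D show "\<exists>d. (?h has_real_derivative d) (at y) \<and> d \<le> 0" by blast
  qed
  moreover have "phi \<alpha> q y = ?h y" if "0 < y" for y
    using that by (simp add: phi_def powr_diff powr_minus powr_realpow field_simps)
  ultimately show ?thesis using assms(1,2) pi_gt3 by simp
qed

lemma phi_add_two_pi_le_base:
  fixes \<theta> \<alpha> :: real and q :: nat
  assumes "1 \<le> \<theta>" "\<theta> \<le> pi" "1 < \<alpha>" "\<alpha> < 2" "q \<ge> 3" "3 / 2 \<le> \<theta> powr \<alpha>"
  shows "phi \<alpha> q (\<theta> + 2 * pi) \<le> phi \<alpha> q \<theta>"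
proof -
  define v where "v = \<theta> + 2 * pi"
  define r where "r = \<theta> / v"
  have pos: "0 < v" "0 < \<theta>" using assms pi_gt3 by (auto simp: v_def)
  have r: "0 < r" "r \<le> 1 / 3" using pos assms by (auto simp: r_def v_def field_simps)
  have "r ^ q \<le> r ^ 3" using r assms(5) by (intro power_decreasing) auto
  also have "\<dots> \<le> (1 / 3) * r ^ 2" using r by (simp add: power3_eq_cube power2_eq_square mult_right_mono)
  also have "r ^ 2 \<le> r powr \<alpha>" using r assms powr_mono'[of \<alpha> 2 r] by (simp add: powr_realpow)
  finally have "3 * r ^ q \<le> r powr \<alpha>" by simp
  then have "3 * (\<theta> ^ q * v powr \<alpha>) \<le> \<theta> powr \<alpha> * v ^ q"
    using pos by (simp add: r_def power_divide powr_divide field_simps)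
  then have "v powr \<alpha> / v ^ q \<le> (\<theta> powr \<alpha> / 3) / \<theta> ^ q"
    using pos by (simp add: field_simps)
  moreover have "phi \<alpha> q v = v powr \<alpha> / v ^ q - 1 / v ^ q"
    using pos by (simp add: phi_def diff_divide_distrib)
  moreover have "0 \<le> 1 / v ^ q" using pos by simp
  ultimately have "phi \<alpha> q v \<le> (\<theta> powr \<alpha> / 3) / \<theta> ^ q" by linarith
  \<comment> \<open>\<open>\<theta>\<^sup>\<alpha>/3 \<le> \<theta>\<^sup>\<alpha> - 1\<close> is exactly the hypothesis \<open>\<theta>\<^sup>\<alpha> \<ge> 3/2\<close>\<close>
  also have "\<dots> \<le> (\<theta> powr \<alpha> - 1) / \<theta> ^ q" using assms pos by (intro divide_right_mono) auto
  finally show ?thesis using pos by (simp add: phi_def v_def)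
qed

lemma phi_add_two_pi_le:
  fixes \<theta> \<alpha> :: real and q :: nat and k :: int
  assumes "1 \<le> \<theta>" "\<theta> \<le> pi" "1 < \<alpha>" "\<alpha> < 2" "q \<ge> 3" "odd q" "3 / 2 \<le> \<theta> powr \<alpha>"
    and x: "x = \<theta> + 2 * of_int (2 * k) * pi"
  shows "phi \<alpha> q (x + 2 * pi) \<le> phi \<alpha> q x"
proof -
  have x4: "x = \<theta> + 4 * (of_int k * pi)" using x by simp
  consider "k = 0" | "k \<ge> 1" | "k \<le> -1" by linarith
  then show ?thesis
  proof cases
    case 1
    then show ?thesis using phi_add_two_pi_le_base[OF assms(1-5,7)] x by simp
  next
    case 2
    then have "pi \<le> of_int k * pi" using mult_right_mono[of 1 "of_int k" pi] by simp
    then have "pi \<le> x" using x4 assms(1) pi_gt3 by linarith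
    then show ?thesis using phi_antimono[of x "x + 2 * pi"] assms by simp
  next
    case 3
    then have "of_int k * pi \<le> - pi" using mult_right_mono[of "of_int k" "-1" pi] by simp
    then have "pi \<le> - (x + 2 * pi)" using x4 assms(2) by linarith
    then have "phi \<alpha> q (- x) \<le> phi \<alpha> q (- (x + 2 * pi))"
      using phi_antimono[of "- (x + 2 * pi)" "- x"] assms by (simp del: minus_add_distrib)
    then show ?thesis
      using phi_uminus[OF assms(6), where \<alpha> = \<alpha> and x = x]
        phi_uminus[OF assms(6), where \<alpha> = \<alpha> and x = "x + 2 * pi"] by linarith
  qed
qed

lemma fpb_term_pair_diff_nonneg:
  fixes \<theta> \<alpha> :: real and p :: nat and k :: int
  assumes "1 \<le> \<theta>" "\<theta> \<le> pi" "1 < \<alpha>" "\<alpha> < 2" "p \<ge> 2" "even p" "3 / 2 \<le> \<theta> powr \<alpha>"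
  shows "0 \<le> (fpb_term p \<alpha> \<theta> (2 * k) - fpb_term p 0 \<theta> (2 * k))
            + (fpb_term p \<alpha> \<theta> (2 * k + 1) - fpb_term p 0 \<theta> (2 * k + 1))"
proof -
  define x where "x = \<theta> + 2 * of_int (2 * k) * pi"
  have x_succ: "\<theta> + 2 * of_int (2 * k + 1) * pi = x + 2 * pi" by (simp add: x_def algebra_simps)
  have "real_of_int \<bar>2 * k\<bar> + 1 \<le> \<bar>x\<bar>"
    using abs_shift_ge[OF assms(1,2), of "2 * k"] unfolding x_def .
  moreover have "real_of_int \<bar>2 * k + 1\<bar> + 1 \<le> \<bar>x + 2 * pi\<bar>"
    using abs_shift_ge[OF assms(1,2), of "2 * k + 1"] unfolding x_succ .
  ultimately have "x \<noteq> 0" "x + 2 * pi \<noteq> 0" by auto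
  then have "(fpb_term p \<alpha> \<theta> (2 * k) - fpb_term p 0 \<theta> (2 * k))
            + (fpb_term p \<alpha> \<theta> (2 * k + 1) - fpb_term p 0 \<theta> (2 * k + 1))
      = (2 * sin (\<theta> / 2)) ^ (p + 1) * (phi \<alpha> (p + 1) x - phi \<alpha> (p + 1) (x + 2 * pi))"
    using fpb_term_diff[OF assms(6), of \<alpha> \<theta> "2 * k", folded x_def]
      fpb_term_diff[OF assms(6), of \<alpha> \<theta> "2 * k + 1", unfolded x_succ] assms(3)
    by (simp add: algebra_simps)
  moreover have "0 \<le> sin (\<theta> / 2)" using assms(1,2) by (intro sin_ge_zero) auto
  moreover have "phi \<alpha> (p + 1) (x + 2 * pi) \<le> phi \<alpha> (p + 1) x"
    using assms by (intro phi_add_two_pi_le[OF assms(1-4) _ _ assms(7) x_def]) auto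
  ultimately show ?thesis by simp
qed

lemma fpb_zero_le_fpb:
  fixes \<alpha> \<theta> :: real and p :: nat
  assumes "1 \<le> \<theta>" "\<theta> \<le> pi" "1 < \<alpha>" "\<alpha> < 2" "p \<ge> 2" "even p" "3 / 2 \<le> \<theta> powr \<alpha>"
  shows "fpb p 0 \<theta> \<le> fpb p \<alpha> \<theta>"
proof -
  define d where "d = (\<lambda>l. fpb_term p \<alpha> \<theta> l - fpb_term p 0 \<theta> l)"
  have summable_0: "fpb_term p 0 \<theta> summable_on UNIV"
    and summable_\<alpha>: "fpb_term p \<alpha> \<theta> summable_on UNIV"
    using assms by (auto intro!: fpb_term_summable)
  have "(\<lambda>l. fpb_term p \<alpha> \<theta> l + - fpb_term p 0 \<theta> l) summable_on UNIV"
    using summable_\<alpha> summable_0 by (intro summable_on_add) (simp_all add: summable_on_uminus)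
  then have summable_d: "d summable_on UNIV" by (simp add: d_def)
  have "fpb p \<alpha> \<theta> = (\<Sum>\<^sub>\<infinity>l. fpb_term p 0 \<theta> l + d l)"
    by (simp add: fpb_eq_infsum_fpb_term d_def)
  also have "\<dots> = fpb p 0 \<theta> + (\<Sum>\<^sub>\<infinity>l. d l)"
    by (simp add: infsum_add[OF summable_0 summable_d] fpb_eq_infsum_fpb_term)
  also have "(\<Sum>\<^sub>\<infinity>l. d l) = (\<Sum>\<^sub>\<infinity>k. d (2 * k) + d (2 * k + 1))"
    by (rule infsum_int_pairs[OF summable_d])
  finally have "fpb p \<alpha> \<theta> = fpb p 0 \<theta> + (\<Sum>\<^sub>\<infinity>k. d (2 * k) + d (2 * k + 1))" .
  moreover have "0 \<le> (\<Sum>\<^sub>\<infinity>k. d (2 * k) + d (2 * k + 1))"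
    using fpb_term_pair_diff_nonneg[OF assms] by (intro infsum_nonneg) (simp add: d_def)
  ultimately show ?thesis by simp
qed

lemma threshold_imp_powr_ge:
  fixes \<alpha> \<theta> :: real
  assumes "1 < \<alpha>" "(pi ^ 4 / 48) powr (1 / \<alpha>) \<le> \<theta>"
  shows "3 / 2 \<le> \<theta> powr \<alpha>" "1 \<le> \<theta>"
proof -
  define a where "a = (pi ^ 4 / 48) powr (1 / \<alpha>)"
  have "0 < a" by (simp add: a_def)
  have "(3 :: real) ^ 4 \<le> pi ^ 4" using pi_gt3 by (intro power_mono) auto
  then have "3 / 2 \<le> a powr \<alpha>" using assms(1) by (simp add: a_def powr_powr)
  also have "\<dots> \<le> \<theta> powr \<alpha>" using \<open>0 < a\<close> assms by (intro powr_mono2) (auto simp: a_def)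
  finally show ge: "3 / 2 \<le> \<theta> powr \<alpha>" .
  have "0 < \<theta>" using \<open>0 < a\<close> assms(2) unfolding a_def by linarith
  show "1 \<le> \<theta>"
  proof (rule ccontr)
    assume "\<not> 1 \<le> \<theta>"
    then have "\<theta> powr \<alpha> \<le> \<theta>" using \<open>0 < \<theta>\<close> assms(1) by (intro powr_le_one_le) auto
    with \<open>\<not> 1 \<le> \<theta>\<close> ge show False by linarith
  qed
qed

theorem proposition5p5:
  fixes \<alpha> \<theta> :: real and p :: nat
  assumes "1 < \<alpha>" and "\<alpha> < 2"
    and "p \<ge> 2" and "even p"
    and "(pi ^ 4 / 48) powr (1 / \<alpha>) \<le> \<bar>\<theta>\<bar>" and "\<bar>\<theta>\<bar> \<le> pi"
  shows "fpb p 0 \<theta> \<le> fpb p \<alpha> \<theta>"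
proof -
  have "fpb p 0 \<bar>\<theta>\<bar> \<le> fpb p \<alpha> \<bar>\<theta>\<bar>"
    using threshold_imp_powr_ge[OF assms(1,5)] assms by (intro fpb_zero_le_fpb) auto
  then show ?thesis by (cases "\<theta> \<ge> 0") (simp_all add: fpb_uminus)
qed

end
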